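(* Let $\Gamma=(V,E)$ be a $d$-regular graph on $N$ vertices whose adjacency matrix $A$ has eigenvalues $d=\lambda_1\ge\lambda_2\ge\dots\ge\lambda_N$. Let $M\in\{1,\dots,N-1\}$ with $|\lambda_M|<|\lambda_N|$, and let $U=\mathrm{Span}\{\mathbf{f}\}\oplus\bigoplus_{i>M}\ker(A-\lambda_iI)$. Let $X\subset V$ be an independent set, $\alpha=|X|/N$, and $D=\|\chi_X-P_U(\chi_X)\|_2$. Then $$D^2\le \frac{(1-\alpha)|\lambda_N|-d\alpha}{|\lambda_N|-|\lambda_M|}\,\alpha.$$
   Context: $\mathbf{f}$ is the all-ones vector in $\mathbb{R}^V$, $\chi_X$ the characteristic vector of $X$, and $\mathbb{R}^V$ carries the inner product $\langle x,y\rangle=\frac1{|V|}\sum_{i\in V}x_iy_i$ with norm $\|x\|_2=\sqrt{\langle x,x\rangle}$. $P_U$ denotes orthogonal projection onto $U$. An independent set is a set of vertices with no edges between them. *)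

theory Defs
  imports "HOL-Analysis.Analysis" "HOL-Computational_Algebra.Polynomial"
begin

definition simple_graph :: "('n \<Rightarrow> 'n \<Rightarrow> bool) \<Rightarrow> bool" where
  "simple_graph E \<longleftrightarrow> (\<forall>i j. E i j \<longrightarrow> E j i) \<and> (\<forall>i. \<not> E i i)"

definition regular :: "('n::finite \<Rightarrow> 'n \<Rightarrow> bool) \<Rightarrow> nat \<Rightarrow> bool" where
  "regular E d \<longleftrightarrow> (\<forall>i. card {j. E i j} = d)"

definition adj_matrix :: "('n::finite \<Rightarrow> 'n \<Rightarrow> bool) \<Rightarrow> real^'n^'n" where
  "adj_matrix E = (\<chi> i j. if E i j then 1 else 0)"

definition charpoly :: "real^'n^'n \<Rightarrow> real poly" where
  "charpoly A = det (mat [:0, 1:] - (\<chi> i j. [:A $ i $ j:]))"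

definition sorted_eigenvalues :: "real^'n^'n \<Rightarrow> (nat \<Rightarrow> real) \<Rightarrow> bool" where
  "sorted_eigenvalues A lam \<longleftrightarrow>
     charpoly A = (\<Prod>i\<in>{1..CARD('n)}. [:- lam i, 1:]) \<and>
     (\<forall>i j. 1 \<le> i \<longrightarrow> i \<le> j \<longrightarrow> j \<le> CARD('n) \<longrightarrow> lam j \<le> lam i)"

definition eigenspace :: "real^'n^'n \<Rightarrow> real \<Rightarrow> (real^'n) set" where
  "eigenspace A \<mu> = {x. A *v x = \<mu> *\<^sub>R x}"

definition ones :: "real^'n" where "ones = (\<chi> i. 1)"

definition charvec :: "'n set \<Rightarrow> real^'n" where
  "charvec X = (\<chi> i. if i \<in> X then 1 else 0)"

definition ip :: "real^'n::finite \<Rightarrow> real^'n \<Rightarrow> real" where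
  "ip x y = (1 / real CARD('n)) * (\<Sum>i\<in>UNIV. x $ i * y $ i)"

definition nrm2 :: "real^'n::finite \<Rightarrow> real" where
  "nrm2 x = sqrt (ip x x)"

definition orth_proj :: "(real^'n::finite) set \<Rightarrow> real^'n \<Rightarrow> real^'n" where
  "orth_proj U x = (THE p. p \<in> U \<and> (\<forall>u\<in>U. ip (x - p) u = 0))"

definition independent_set :: "('n \<Rightarrow> 'n \<Rightarrow> bool) \<Rightarrow> 'n set \<Rightarrow> bool" where
  "independent_set E X \<longleftrightarrow> (\<forall>i\<in>X. \<forall>j\<in>X. \<not> E i j)"

end

theory Submission
  imports Defs
begin

text \<open>Write \<chi>_X = \<alpha> f + u + v with u \<in> U orthogonal to f and v orthogonal to U, so that D = |v|.
  Since U is A-invariant and A is symmetric, the complement of U is A-invariant too and all cross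
  terms of the quadratic form vanish. Independence of X makes the form zero at \<chi>_X, giving
  0 = \<alpha>^2 d N + u\<bullet>Au + v\<bullet>Av, while \<alpha> N = |\<chi>_X|^2 = \<alpha>^2 N + |u|^2 + |v|^2. The Rayleigh bounds
  u\<bullet>Au \<ge> \<lambda>_N |u|^2 and v\<bullet>Av \<ge> \<lambda>_M |v|^2 (an eigenvector orthogonal to U has eigenvalue \<lambda>_i with
  i \<le> M) then eliminate |u|^2.\<close>

lemma symmetric_matrix_inner:
  fixes A :: "real^'n::finite^'n"
  assumes "transpose A = A"
  shows "(A *v x) \<bullet> y = x \<bullet> (A *v y)"
  by (metis assms dot_lmul_matrix vector_transpose_matrix)

lemma quadratic_form_add:
  fixes A :: "real^'n::finite^'n"
  assumes "transpose A = A" "(A *v u) \<bullet> v = 0"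
  shows "(u + v) \<bullet> (A *v (u + v)) = u \<bullet> (A *v u) + v \<bullet> (A *v v)"
proof -
  have "u \<bullet> (A *v v) = 0" "v \<bullet> (A *v u) = 0"
    using assms symmetric_matrix_inner[OF assms(1)] by (auto simp: inner_commute)
  then show ?thesis
    by (simp add: matrix_vector_right_distrib inner_add_left inner_add_right)
qed

lemma orthogonal_comp_invariant:
  fixes A :: "real^'n::finite^'n"
  assumes "transpose A = A" "\<And>u. u \<in> U \<Longrightarrow> A *v u \<in> U" "y \<in> U\<^sup>\<bottom>"
  shows "A *v y \<in> U\<^sup>\<bottom>"
  using assms by (simp add: orthogonal_comp_def orthogonal_def symmetric_matrix_inner[symmetric])

lemma span_eigenvectors_invariant:
  fixes A :: "real^'n::finite^'n"
  assumes "\<And>g. g \<in> G \<Longrightarrow> \<exists>c. A *v g = c *\<^sub>R g" "x \<in> span G"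
  shows "A *v x \<in> span G"
proof -
  have "A *v x \<in> span ((*v) A ` G)"
    using assms(2) by (simp add: span_linear_image[OF matrix_vector_mul_linear])
  moreover have "A *v g \<in> span G" if "g \<in> G" for g
    using assms(1)[OF that] span_base[OF that] by (metis span_scale)
  then have "span ((*v) A ` G) \<subseteq> span G"
    by (intro span_minimal) auto
  ultimately show ?thesis by blast
qed

lemma ip_eq_inner: "ip x y = (x \<bullet> y) / real CARD('n)" for x y :: "real^'n::finite"
  by (simp add: ip_def inner_vec_def)

lemma orth_proj_eqI:
  fixes x p :: "real^'n::finite"
  assumes "subspace U" "p \<in> U" "x - p \<in> U\<^sup>\<bottom>"
  shows "orth_proj U x = p"
  unfolding orth_proj_def
proof (rule the_equality)
  show "p \<in> U \<and> (\<forall>u\<in>U. ip (x - p) u = 0)"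
    using assms by (simp add: ip_eq_inner orthogonal_comp_def orthogonal_def inner_commute)
next
  fix q assume q: "q \<in> U \<and> (\<forall>u\<in>U. ip (x - q) u = 0)"
  then have "p - q \<in> U" using assms by (simp add: subspace_diff)
  then have "(x - q) \<bullet> (p - q) = 0" "(x - p) \<bullet> (p - q) = 0"
    using q assms(3) by (auto simp: ip_eq_inner orthogonal_comp_def orthogonal_def inner_commute)
  moreover have "(p - q) \<bullet> (p - q) = (x - q) \<bullet> (p - q) - (x - p) \<bullet> (p - q)"
    by (simp add: inner_diff_left)
  ultimately show "q = p" by simp
qed

lemma orth_proj_span:
  fixes x :: "real^'n::finite"
  shows "orth_proj (span G) x \<in> span G \<and> x - orth_proj (span G) x \<in> (span G)\<^sup>\<bottom>"
proof -
  obtain p z where "p \<in> span G" "\<And>w. w \<in> span G \<Longrightarrow> orthogonal z w" "x = p + z"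
    using orthogonal_subspace_decomp_exists by metis
  then have "p \<in> span G" "x - p \<in> (span G)\<^sup>\<bottom>"
    by (auto simp: orthogonal_comp_def orthogonal_commute)
  moreover from this have "orth_proj (span G) x = p"
    by (intro orth_proj_eqI) auto
  ultimately show ?thesis by simp
qed

lemma mat_vector_mult: "mat c *v (x::real^'n::finite) = c *\<^sub>R x"
  by (simp add: vec_eq_iff matrix_vector_mult_def mat_def if_distrib if_distribR cong: if_cong)

lemma nonneg_quadratic_imp_linear_coeff_zero:
  fixes a b :: real
  assumes "\<And>t. 0 \<le> 2 * t * a + t\<^sup>2 * b" "0 \<le> b"
  shows "a = 0"
proof -
  define t where "t = - a / (b + 1)"
  have "b + 1 > 0" using assms(2) by simp
  then have tb: "t * (b + 1) = - a" by (simp add: t_def)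
  have "0 \<le> 2 * t * a + t\<^sup>2 * b" by (rule assms(1))
  also have "\<dots> \<le> 2 * t * a + t\<^sup>2 * (b + 1)" by (simp add: distrib_left)
  also have "t\<^sup>2 * (b + 1) = - (t * a)"
    by (metis tb mult.assoc power2_eq_square mult_minus_right)
  also have "2 * t * a + - (t * a) = - a\<^sup>2 / (b + 1)"
    by (simp add: t_def power2_eq_square)
  finally have "a\<^sup>2 \<le> 0"
    using \<open>b + 1 > 0\<close> by (simp add: divide_le_0_iff)
  then show ?thesis by simp
qed

text \<open>Expanding the form at x + t Bx, nonnegativity for all t forces |Bx|^2 = 0.\<close>
lemma psd_form_zero_imp_kernel:
  fixes B :: "real^'n::finite^'n"
  assumes sym: "transpose B = B" and S: "subspace S" "\<And>y. y \<in> S \<Longrightarrow> B *v y \<in> S"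
    and psd: "\<And>y. y \<in> S \<Longrightarrow> 0 \<le> y \<bullet> (B *v y)"
    and x: "x \<in> S" "x \<bullet> (B *v x) = 0"
  shows "B *v x = 0"
proof -
  define y where "y = B *v x"
  have yS: "y \<in> S" using S x by (simp add: y_def)
  have "x \<bullet> (B *v y) = y \<bullet> y"
    using symmetric_matrix_inner[OF sym, of x y] by (simp add: y_def)
  then have "(x + t *\<^sub>R y) \<bullet> (B *v (x + t *\<^sub>R y)) = 2 * t * (y \<bullet> y) + t\<^sup>2 * (y \<bullet> (B *v y))" for t
    using x(2) by (simp add: matrix_vector_right_distrib matrix_vector_mult_scaleR inner_add_left
        inner_add_right y_def power2_eq_square algebra_simps)
  moreover have "x + t *\<^sub>R y \<in> S" for t
    using S x yS by (simp add: subspace_add subspace_scale)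
  ultimately have "y \<bullet> y = 0"
    using psd yS by (intro nonneg_quadratic_imp_linear_coeff_zero[of _ "y \<bullet> (B *v y)"]) metis+
  then show ?thesis by (simp add: y_def)
qed

lemma rayleigh_minimizer:
  fixes A :: "real^'n::finite^'n"
  assumes "subspace S" "S \<noteq> {0}"
  obtains x where "x \<in> S" "norm x = 1"
    "\<And>y. y \<in> S \<Longrightarrow> (x \<bullet> (A *v x)) * (y \<bullet> y) \<le> y \<bullet> (A *v y)"
proof -
  let ?K = "S \<inter> sphere 0 1"
  have "compact ?K"
    using compact_Int_closed[of "sphere 0 1" S] assms(1) by (simp add: Int_commute closed_subspace)
  moreover obtain z where "z \<in> S" "z \<noteq> 0" using assms subspace_0 by blast
  then have "z /\<^sub>R norm z \<in> ?K" using assms(1) by (simp add: subspace_scale)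
  moreover have "continuous_on ?K (\<lambda>x. x \<bullet> (A *v x))"
    by (intro continuous_intros matrix_vector_mult_linear_continuous_on)
  ultimately obtain x where x: "x \<in> ?K" and min: "\<And>y. y \<in> ?K \<Longrightarrow> x \<bullet> (A *v x) \<le> y \<bullet> (A *v y)"
    using continuous_attains_inf[of ?K] by blast
  show ?thesis
  proof (rule that)
    show "x \<in> S" "norm x = 1" using x by auto
  next
    fix y assume "y \<in> S"
    show "(x \<bullet> (A *v x)) * (y \<bullet> y) \<le> y \<bullet> (A *v y)"
    proof (cases "y = 0")
      case False
      have "x \<bullet> (A *v x) \<le> (y /\<^sub>R norm y) \<bullet> (A *v (y /\<^sub>R norm y))"
        using \<open>y \<in> S\<close> False assms(1) by (intro min) (simp add: subspace_scale)
      also have "\<dots> = (y \<bullet> (A *v y)) / (y \<bullet> y)"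
        by (simp add: matrix_vector_mult_scaleR power2_norm_eq_inner[symmetric] power2_eq_square
            divide_inverse)
      finally show ?thesis using False by (simp add: pos_le_divide_eq)
    qed simp
  qed
qed

text \<open>The Rayleigh minimum m makes A - m I semidefinite on S and null at the minimiser.\<close>
lemma invariant_subspace_min_eigenvector:
  fixes A :: "real^'n::finite^'n"
  assumes sym: "transpose A = A" and S: "subspace S" "\<And>y. y \<in> S \<Longrightarrow> A *v y \<in> S" "S \<noteq> {0}"
  obtains m x where "x \<in> S" "x \<noteq> 0" "A *v x = m *\<^sub>R x"
    "\<And>y. y \<in> S \<Longrightarrow> m * (y \<bullet> y) \<le> y \<bullet> (A *v y)"
proof -
  obtain x where x: "x \<in> S" "norm x = 1"
    and min: "\<And>y. y \<in> S \<Longrightarrow> (x \<bullet> (A *v x)) * (y \<bullet> y) \<le> y \<bullet> (A *v y)"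
    using rayleigh_minimizer[OF S(1,3)] by blast
  define m where "m = x \<bullet> (A *v x)"
  define B where "B = A - mat m"
  have Bv: "B *v y = A *v y - m *\<^sub>R y" for y
    by (simp add: B_def matrix_vector_mult_diff_rdistrib mat_vector_mult)
  have "transpose B = B"
    using sym by (simp add: B_def vec_eq_iff transpose_def mat_def)
  moreover have "y \<in> S \<Longrightarrow> B *v y \<in> S" for y
    using S by (simp add: Bv subspace_diff subspace_scale)
  moreover have "y \<in> S \<Longrightarrow> 0 \<le> y \<bullet> (B *v y)" for y
    using min[of y] by (simp add: Bv inner_diff_right m_def)
  moreover have "x \<bullet> (B *v x) = 0"
    using x(2) by (simp add: Bv inner_diff_right m_def power2_norm_eq_inner[symmetric])
  ultimately have "B *v x = 0"
    using psd_form_zero_imp_kernel S(1) x(1) by blast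
  moreover have "x \<noteq> 0" using x(2) by auto
  ultimately show ?thesis
    using that[of x m] x(1) min by (simp add: Bv m_def)
qed

lemma poly_det: "poly (det (P::'a::comm_ring_1 poly^'n::finite^'n)) c = det (\<chi> i j. poly (P$i$j) c)"
  unfolding det_def by (simp add: poly_sum poly_prod)

lemma eigenvalue_imp_charpoly_root:
  fixes A :: "real^'n::finite^'n"
  assumes "A *v x = m *\<^sub>R x" "x \<noteq> 0"
  shows "poly (charpoly A) m = 0"
proof -
  have "(mat m - A) *v x = 0"
    using assms(1) by (simp add: matrix_vector_mult_diff_rdistrib mat_vector_mult)
  then have "\<not> invertible (mat m - A)"
    using assms(2) by (metis invertible_def matrix_vector_mul_assoc matrix_vector_mul_lid
        matrix_vector_mult_0_right)
  moreover have "(\<chi> i j. poly ((mat [:0, 1:] - (\<chi> i j. [:A $ i $ j:]))$i$j) m) = mat m - A"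
    by (simp add: vec_eq_iff mat_def)
  ultimately show ?thesis
    unfolding charpoly_def poly_det by (simp add: invertible_det_nz)
qed

lemma sorted_eigenvalues_eigenvalue:
  fixes A :: "real^'n::finite^'n"
  assumes "sorted_eigenvalues A lam" "A *v x = m *\<^sub>R x" "x \<noteq> 0"
  obtains i where "i \<in> {1..CARD('n)}" "m = lam i"
proof -
  have "(\<Prod>i\<in>{1..CARD('n)}. m - lam i) = 0"
    using eigenvalue_imp_charpoly_root[OF assms(2,3)] assms(1)
    by (simp add: sorted_eigenvalues_def poly_prod)
  then show ?thesis using that by auto
qed

lemma rayleigh_lower_bound:
  fixes A :: "real^'n::finite^'n"
  assumes sym: "transpose A = A" and lam: "sorted_eigenvalues A lam"
    and S: "subspace S" "\<And>y. y \<in> S \<Longrightarrow> A *v y \<in> S"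
    and k: "k \<le> CARD('n)" "\<And>i. i \<in> {k<..CARD('n)} \<Longrightarrow> eigenspace A (lam i) \<inter> S \<subseteq> {0}"
    and y: "y \<in> S"
  shows "lam k * (y \<bullet> y) \<le> y \<bullet> (A *v y)"
proof (cases "S = {0}")
  case True
  then show ?thesis using y by simp
next
  case False
  obtain m x where x: "x \<in> S" "x \<noteq> 0" "A *v x = m *\<^sub>R x"
    and min: "\<And>y. y \<in> S \<Longrightarrow> m * (y \<bullet> y) \<le> y \<bullet> (A *v y)"
    using invariant_subspace_min_eigenvector[OF sym S False] by blast
  obtain i where i: "i \<in> {1..CARD('n)}" "m = lam i"
    using sorted_eigenvalues_eigenvalue[OF lam x(3,2)] .
  have "i \<le> k"
    using k(2)[of i] i x by (force simp: eigenspace_def)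
  then have "lam k \<le> m"
    using lam i k(1) by (simp add: sorted_eigenvalues_def)
  then have "lam k * (y \<bullet> y) \<le> m * (y \<bullet> y)"
    by (simp add: mult_right_mono)
  also have "\<dots> \<le> y \<bullet> (A *v y)" using min y .
  finally show ?thesis .
qed

lemma rayleigh_lower_bound_orthogonal_comp:
  fixes A :: "real^'n::finite^'n"
  assumes sym: "transpose A = A" and lam: "sorted_eigenvalues A lam"
    and U: "\<And>u. u \<in> U \<Longrightarrow> A *v u \<in> U"
    and k: "k \<le> CARD('n)" "\<And>i. i \<in> {k<..CARD('n)} \<Longrightarrow> eigenspace A (lam i) \<subseteq> U"
    and y: "y \<in> U\<^sup>\<bottom>"
  shows "lam k * (y \<bullet> y) \<le> y \<bullet> (A *v y)"
proof (rule rayleigh_lower_bound[OF sym lam subspace_orthogonal_comp orthogonal_comp_invariant[OF sym U]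
      k(1) _ y])
  show "eigenspace A (lam i) \<inter> U\<^sup>\<bottom> \<subseteq> {0}" if "i \<in> {k<..CARD('n)}" for i
  proof
    fix z assume "z \<in> eigenspace A (lam i) \<inter> U\<^sup>\<bottom>"
    then have "z \<in> U" "z \<in> U\<^sup>\<bottom>" using k(2)[OF that] by auto
    then have "z \<bullet> z = 0" by (simp add: orthogonal_comp_def orthogonal_def)
    then show "z \<in> {0}" by simp
  qed
qed

lemma transpose_adj_matrix: "simple_graph E \<Longrightarrow> transpose (adj_matrix E) = adj_matrix E"
  by (auto simp: simple_graph_def adj_matrix_def transpose_def vec_eq_iff)

lemma adj_matrix_ones:
  assumes "regular E d"
  shows "adj_matrix E *v ones = real d *\<^sub>R ones"
proof -
  have "(\<Sum>j\<in>UNIV. if E i j then 1 else 0) = real d" for i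
    using assms by (simp add: regular_def sum.If_cases)
  then show ?thesis
    by (simp add: adj_matrix_def ones_def vec_eq_iff matrix_vector_mult_def)
qed

lemma independent_set_charvec_form:
  assumes "independent_set E X"
  shows "charvec X \<bullet> (adj_matrix E *v charvec X) = 0"
proof -
  have terms: "charvec X $ i * (adj_matrix E $ i $ j * charvec X $ j) = 0" for i j
    using assms by (simp add: charvec_def adj_matrix_def independent_set_def)
  show ?thesis
    by (simp add: inner_vec_def matrix_vector_mult_def sum_distrib_left terms)
qed

lemma inner_charvec_ones:
  "charvec X \<bullet> charvec X = real (card X)" "charvec X \<bullet> ones = real (card X)"
  "ones \<bullet> (ones :: real^'n::finite) = real CARD('n)"
  by (simp_all add: charvec_def ones_def inner_vec_def if_distrib if_distribR sum.If_cases
      cong: if_cong)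

lemma projection_residual_bound:
  fixes A :: "real^'n::finite^'n" and f x p :: "real^'n"
  assumes sym: "transpose A = A" and U: "subspace U" "\<And>u. u \<in> U \<Longrightarrow> A *v u \<in> U"
    and f: "f \<in> U" "A *v f = d *\<^sub>R f" "f \<bullet> f = n" "n > 0"
    and x: "x \<bullet> (A *v x) = 0" "x \<bullet> x = c" "x \<bullet> f = c"
    and p: "p \<in> U" "x - p \<in> U\<^sup>\<bottom>"
    and \<mu>: "\<And>y. \<mu> * (y \<bullet> y) \<le> y \<bullet> (A *v y)"
    and \<kappa>: "\<And>y. y \<in> U\<^sup>\<bottom> \<Longrightarrow> \<kappa> * (y \<bullet> y) \<le> y \<bullet> (A *v y)" "\<bar>\<kappa>\<bar> < \<bar>\<mu>\<bar>"
  shows "(x - p) \<bullet> (x - p) / n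
    \<le> ((1 - c / n) * \<bar>\<mu>\<bar> - d * (c / n)) / (\<bar>\<mu>\<bar> - \<bar>\<kappa>\<bar>) * (c / n)"
proof -
  define L where "L = \<bar>\<mu>\<bar>"
  define K where "K = \<bar>\<kappa>\<bar>"
  have neg_abs: "- \<bar>l\<bar> * (y \<bullet> y) \<le> l * (y \<bullet> y)" for l :: real and y :: "real^'n"
    using mult_right_mono[of "- \<bar>l\<bar>" l "y \<bullet> y"] by (simp add: abs_le_iff)
  have L: "- L * (y \<bullet> y) \<le> y \<bullet> (A *v y)" for y
    using neg_abs[of \<mu> y] \<mu>[of y] by (simp add: L_def)
  have K: "- K * (y \<bullet> y) \<le> y \<bullet> (A *v y)" if "y \<in> U\<^sup>\<bottom>" for y
    using neg_abs[of \<kappa> y] \<kappa>(1)[OF that] by (simp add: K_def)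
  define \<alpha> where "\<alpha> = c / n"
  define v where "v = x - p"
  define u where "u = p - \<alpha> *\<^sub>R f"
  have c: "c = \<alpha> * n" using f(4) by (simp add: \<alpha>_def)
  have "u \<in> U" using U p f by (simp add: u_def subspace_diff subspace_scale)
  have v_perp: "w \<bullet> v = 0" if "w \<in> U" for w
    using p(2) that by (simp add: v_def orthogonal_comp_def orthogonal_def)
  have "p \<bullet> f = c"
    using v_perp[OF f(1)] x(3) by (simp add: v_def inner_diff_right inner_commute)
  then have uf: "u \<bullet> f = 0"
    using f(3) c by (simp add: u_def inner_diff_left)
  have "(A *v (\<alpha> *\<^sub>R f)) \<bullet> u = 0"
    using uf f(2) by (simp add: matrix_vector_mult_scaleR inner_commute)
  then have "p \<bullet> (A *v p) = \<alpha>\<^sup>2 * d * n + u \<bullet> (A *v u)"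
    using quadratic_form_add[OF sym, of "\<alpha> *\<^sub>R f" u] f(2,3)
    by (simp add: u_def matrix_vector_mult_scaleR power2_eq_square)
  moreover have "x \<bullet> (A *v x) = p \<bullet> (A *v p) + v \<bullet> (A *v v)"
    using quadratic_form_add[OF sym v_perp[OF U(2)[OF p(1)]]] by (simp add: v_def)
  ultimately have energy: "0 = \<alpha>\<^sup>2 * d * n + u \<bullet> (A *v u) + v \<bullet> (A *v v)"
    using x(1) by simp
  have "x = \<alpha> *\<^sub>R f + u + v" by (simp add: u_def v_def)
  then have mass: "c = \<alpha>\<^sup>2 * n + u \<bullet> u + v \<bullet> v"
    using x(2) f(3) uf v_perp[OF f(1)] v_perp[OF \<open>u \<in> U\<close>]
    by (simp add: inner_add_left inner_add_right inner_commute power2_eq_square algebra_simps)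
  have "L * (u \<bullet> u) = L * c - L * (\<alpha>\<^sup>2 * n) - L * (v \<bullet> v)"
    using mass by (simp add: algebra_simps)
  moreover have "(L - K) * (v \<bullet> v) = L * (v \<bullet> v) - K * (v \<bullet> v)"
    by (simp add: algebra_simps)
  moreover have "\<alpha> * n * ((1 - \<alpha>) * L - d * \<alpha>) = L * c - L * (\<alpha>\<^sup>2 * n) - \<alpha>\<^sup>2 * d * n"
    using c by (simp add: algebra_simps power2_eq_square)
  moreover have "- K * (v \<bullet> v) \<le> v \<bullet> (A *v v)"
    using K p(2) by (simp add: v_def)
  ultimately have "(L - K) * (v \<bullet> v) \<le> \<alpha> * n * ((1 - \<alpha>) * L - d * \<alpha>)"
    using energy L[of u] by linarith
  then show ?thesis
    using f(4) \<kappa>(2) by (simp add: \<alpha>_def[symmetric] v_def[symmetric] L_def[symmetric] K_def[symmetric]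
        field_simps)
qed

theorem lemma4p2:
  fixes E :: "'n::finite \<Rightarrow> 'n \<Rightarrow> bool" and d :: nat and lam :: "nat \<Rightarrow> real"
    and M :: nat and X :: "'n set"
  assumes "simple_graph E"
    and "regular E d"
    and "sorted_eigenvalues (adj_matrix E) lam"
    and "lam 1 = real d"
    and "1 \<le> M" and "M \<le> CARD('n) - 1"
    and "\<bar>lam M\<bar> < \<bar>lam CARD('n)\<bar>"
    and "independent_set E X"
  shows "let N = CARD('n);
             U = span ({ones} \<union> (\<Union>i\<in>{M<..N}. eigenspace (adj_matrix E) (lam i)));
             \<alpha> = real (card X) / real N;
             D = nrm2 (charvec X - orth_proj U (charvec X))
         in D\<^sup>2 \<le> ((1 - \<alpha>) * \<bar>lam N\<bar> - real d * \<alpha>) / (\<bar>lam N\<bar> - \<bar>lam M\<bar>) * \<alpha>"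
proof -
  define A where "A = adj_matrix E"
  define U where "U = span ({ones} \<union> (\<Union>i\<in>{M<..CARD('n)}. eigenspace A (lam i)))"
  define p where "p = orth_proj U (charvec X)"
  have sym: "transpose A = A" using assms(1) by (simp add: A_def transpose_adj_matrix)
  have Af: "A *v ones = real d *\<^sub>R ones" using assms(2) by (simp add: A_def adj_matrix_ones)
  have lam: "sorted_eigenvalues A lam" using assms(3) by (simp add: A_def)
  have AU: "A *v u \<in> U" if "u \<in> U" for u
    using that unfolding U_def by (rule span_eigenvectors_invariant[rotated]) (auto simp: Af eigenspace_def)
  have p: "p \<in> U" "charvec X - p \<in> U\<^sup>\<bottom>"
    using orth_proj_span unfolding p_def U_def by blast+
  have "lam CARD('n) * (y \<bullet> y) \<le> y \<bullet> (A *v y)" for y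
    by (rule rayleigh_lower_bound[OF sym lam subspace_UNIV]) auto
  moreover have "lam M * (y \<bullet> y) \<le> y \<bullet> (A *v y)" if "y \<in> U\<^sup>\<bottom>" for y
    using that assms(6)
    by (intro rayleigh_lower_bound_orthogonal_comp[OF sym lam AU]) (auto simp: U_def intro: span_base)
  moreover have "subspace U" "ones \<in> U" "real CARD('n) > 0" by (simp_all add: U_def span_base)
  ultimately have "(charvec X - p) \<bullet> (charvec X - p) / real CARD('n)
    \<le> ((1 - real (card X) / real CARD('n)) * \<bar>lam CARD('n)\<bar> - real d * (real (card X) / real CARD('n)))
      / (\<bar>lam CARD('n)\<bar> - \<bar>lam M\<bar>) * (real (card X) / real CARD('n))"
    using projection_residual_bound[OF sym _ AU _ Af inner_charvec_ones(3) _
      independent_set_charvec_form[OF assms(8), folded A_def] inner_charvec_ones(1,2) p _ _ assms(7)]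
    by blast
  moreover have "(nrm2 (charvec X - p))\<^sup>2 = (charvec X - p) \<bullet> (charvec X - p) / real CARD('n)"
    by (simp add: nrm2_def ip_eq_inner)
  ultimately show ?thesis
    unfolding Let_def A_def[symmetric] U_def[symmetric] p_def[symmetric] by linarith
qed

end
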